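(* Let $(L_*,b)$ and $(M_*,b)$ be chain complexes, $i:(L_*,b)\to(M_*,b)$ and $p:(M_*,b)\to(L_*,b)$ chain maps, and $h$ a map of degree $+1$ on $M_*$ with $ip=1+bh+hb$. Let $\delta$ be a small perturbation, put $A=(1-\delta h)^{-1}\delta$, and define $$i_\infty=i+hAi,\quad p_\infty=p+pAh,\quad b_\infty=b+pAi.$$ Then each of the following chain maps is null-homotopic: - $i\circ(p i_\infty-1):(L_*,b_\infty)\to(M_*,b)$; - $(p_\infty i-1)\circ p:(M_*,b)\to(L_*,b_\infty)$; - $(p i_\infty-1)\circ p_\infty:(M_*,b+\delta)\to(L_*,b)$; - $i_\infty\circ(p_\infty i-1):(L_*,b)\to(M_*,b+\delta)$.
   Context: Complexes are chain complexes of modules over a ring, with differentials of degree $-1$. A perturbation $\delta$ is a graded map $M_*\to M_*$ of the same degree as $b$ such that $(b+\delta)^2=0$. It is called small if $1-\delta h$ is invertible. It is known (homological perturbation lemma, HR version) that for a small perturbation, $(L_*,b_\infty)$ is a complex, that $i_\infty:(L_*,b_\infty)\to(M_*,b+\delta)$ and $p_\infty:(M_*,b+\delta)\to(L_*,b_\infty)$ are chain maps, and that $i_\infty p_\infty=1+(b+\delta)h_\infty+h_\infty(b+\delta)$, where $h_\infty=h+hAh$. Moreover, $p_\infty i-1:(L_*,b)\to(L_*,b_\infty)$ and $p i_\infty-1:(L_*,b_\infty)\to(L_*,b)$ are chain maps. *)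

theory Defs
  imports Main
begin

text \<open>Graded modules over a ring 'r are modelled as families of carriers
  M :: int => 'v set inside an abelian group 'v with a scalar action
  s :: 'r => 'v => 'v; M n is the module in degree n.\<close>

definition module_on :: "('r::ring_1 \<Rightarrow> 'v::ab_group_add \<Rightarrow> 'v) \<Rightarrow> 'v set \<Rightarrow> bool" where
  "module_on s S \<longleftrightarrow> 0 \<in> S \<and> (\<forall>x\<in>S. \<forall>y\<in>S. x + y \<in> S) \<and> (\<forall>x\<in>S. \<forall>r. s r x \<in> S)
     \<and> (\<forall>x\<in>S. \<forall>y\<in>S. \<forall>r. s r (x + y) = s r x + s r y)
     \<and> (\<forall>x\<in>S. \<forall>r q. s (r + q) x = s r x + s q x)
     \<and> (\<forall>x\<in>S. \<forall>r q. s (r * q) x = s r (s q x))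
     \<and> (\<forall>x\<in>S. s 1 x = x)"

definition graded_module :: "('r::ring_1 \<Rightarrow> 'v::ab_group_add \<Rightarrow> 'v) \<Rightarrow> (int \<Rightarrow> 'v set) \<Rightarrow> bool" where
  "graded_module s M \<longleftrightarrow> (\<forall>n. module_on s (M n))"

definition graded_map ::
  "('r::ring_1 \<Rightarrow> 'v::ab_group_add \<Rightarrow> 'v) \<Rightarrow> (int \<Rightarrow> 'v set) \<Rightarrow>
   ('r \<Rightarrow> 'w::ab_group_add \<Rightarrow> 'w) \<Rightarrow> (int \<Rightarrow> 'w set) \<Rightarrow> int \<Rightarrow> (int \<Rightarrow> 'v \<Rightarrow> 'w) \<Rightarrow> bool" where
  "graded_map sM M sN N d f \<longleftrightarrow> (\<forall>n.
     (\<forall>x\<in>M n. f n x \<in> N (n + d))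
     \<and> (\<forall>x\<in>M n. \<forall>y\<in>M n. f n (x + y) = f n x + f n y)
     \<and> (\<forall>x\<in>M n. \<forall>r. f n (sM r x) = sN r (f n x)))"

definition chain_complex ::
  "('r::ring_1 \<Rightarrow> 'v::ab_group_add \<Rightarrow> 'v) \<Rightarrow> (int \<Rightarrow> 'v set) \<Rightarrow> (int \<Rightarrow> 'v \<Rightarrow> 'v) \<Rightarrow> bool" where
  "chain_complex s M b \<longleftrightarrow> graded_module s M \<and> graded_map s M s M (-1) b
     \<and> (\<forall>n. \<forall>x\<in>M n. b (n - 1) (b n x) = 0)"

definition chain_map ::
  "('r::ring_1 \<Rightarrow> 'v::ab_group_add \<Rightarrow> 'v) \<Rightarrow> (int \<Rightarrow> 'v set) \<Rightarrow> (int \<Rightarrow> 'v \<Rightarrow> 'v) \<Rightarrow>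
   ('r \<Rightarrow> 'w::ab_group_add \<Rightarrow> 'w) \<Rightarrow> (int \<Rightarrow> 'w set) \<Rightarrow> (int \<Rightarrow> 'w \<Rightarrow> 'w) \<Rightarrow>
   (int \<Rightarrow> 'v \<Rightarrow> 'w) \<Rightarrow> bool" where
  "chain_map sM M bM sN N bN f \<longleftrightarrow> graded_map sM M sN N 0 f
     \<and> (\<forall>n. \<forall>x\<in>M n. bN n (f n x) = f (n - 1) (bM n x))"

definition null_homotopic ::
  "('r::ring_1 \<Rightarrow> 'v::ab_group_add \<Rightarrow> 'v) \<Rightarrow> (int \<Rightarrow> 'v set) \<Rightarrow> (int \<Rightarrow> 'v \<Rightarrow> 'v) \<Rightarrow>
   ('r \<Rightarrow> 'w::ab_group_add \<Rightarrow> 'w) \<Rightarrow> (int \<Rightarrow> 'w set) \<Rightarrow> (int \<Rightarrow> 'w \<Rightarrow> 'w) \<Rightarrow>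
   (int \<Rightarrow> 'v \<Rightarrow> 'w) \<Rightarrow> bool" where
  "null_homotopic sM M bM sN N bN f \<longleftrightarrow> (\<exists>s. graded_map sM M sN N 1 s
     \<and> (\<forall>n. \<forall>x\<in>M n. f n x = bN (n + 1) (s n x) + s (n - 1) (bM n x)))"

end

theory Submission
  imports Defs
begin

(* Write A = (1 - \<delta>h)\<^sup>-\<^sup>1 \<delta>; the hypotheses on g say exactly that g = (1 - \<delta>h)\<^sup>-\<^sup>1.
   The resolvent identities A = \<delta> + \<delta>hA = \<delta> + Ah\<delta> turn (b + \<delta>)\<^sup>2 = 0 into the
   Maurer-Cartan equation bA + Ab + A(ip)A = 0, and this equation is all that is needed to
   show that i\<^sub>\<infinity> and p\<^sub>\<infinity> are chain maps and that i\<^sub>\<infinity>p\<^sub>\<infinity> = 1 + (b + \<delta>)h\<^sub>\<infinity> + h\<^sub>\<infinity>(b + \<delta>)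
   with h\<^sub>\<infinity> = h + hAh.  The four null-homotopies are h i\<^sub>\<infinity>, p\<^sub>\<infinity> h, p h\<^sub>\<infinity> and h\<^sub>\<infinity> i:
   expanding with ip = 1 + bh + hb, or with its perturbed version, leaves in each case
   a remainder that vanishes by a resolvent identity. *)

lemma module_on_smul_zero:
  assumes "module_on s S" "x \<in> S" shows "s 0 x = 0"
  using assms unfolding module_on_def by (metis add.right_neutral add_cancel_right_right)

lemma module_on_uminus:
  assumes "module_on s S" "x \<in> S" shows "- x \<in> S"
proof -
  have "s (1 + -1) x = s 1 x + s (-1) x" using assms unfolding module_on_def by blast
  then have "s (-1) x = - x"
    using assms module_on_smul_zero[OF assms] unfolding module_on_def
    by (metis add.right_inverse add_minus_cancel add.commute)
  then show ?thesis using assms unfolding module_on_def by metis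
qed

lemma graded_module_simps:
  assumes "graded_module s M"
  shows "0 \<in> M n"
    and "x \<in> M n \<Longrightarrow> y \<in> M n \<Longrightarrow> x + y \<in> M n"
    and "x \<in> M n \<Longrightarrow> - x \<in> M n"
    and "x \<in> M n \<Longrightarrow> y \<in> M n \<Longrightarrow> x - y \<in> M n"
    and "x \<in> M n \<Longrightarrow> s r x \<in> M n"
    and "x \<in> M n \<Longrightarrow> y \<in> M n \<Longrightarrow> s r (x + y) = s r x + s r y"
    and "x \<in> M n \<Longrightarrow> y \<in> M n \<Longrightarrow> s r (x - y) = s r x - s r y"
proof -
  have M: "module_on s (M n)" using assms unfolding graded_module_def by blast
  then show "0 \<in> M n"
    and add: "\<And>x y. x \<in> M n \<Longrightarrow> y \<in> M n \<Longrightarrow> x + y \<in> M n"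
    and "\<And>x. x \<in> M n \<Longrightarrow> s r x \<in> M n"
    and smul_add: "\<And>x y. x \<in> M n \<Longrightarrow> y \<in> M n \<Longrightarrow> s r (x + y) = s r x + s r y"
    unfolding module_on_def by blast+
  show uminus: "\<And>x. x \<in> M n \<Longrightarrow> - x \<in> M n" using M module_on_uminus by blast
  then show "\<And>x y. x \<in> M n \<Longrightarrow> y \<in> M n \<Longrightarrow> x - y \<in> M n"
    using add by (metis diff_conv_add_uminus)
  fix x y assume "x \<in> M n" "y \<in> M n"
  then have "s r (y + - y) = s r y + s r (- y)" "s r (x + - y) = s r x + s r (- y)"
    using smul_add uminus by blast+
  moreover have "s r 0 = 0"
    using M module_on_smul_zero unfolding module_on_def by (metis add_cancel_right_right)
  ultimately show "s r (x - y) = s r x - s r y"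
    by (metis add.right_inverse diff_conv_add_uminus minus_unique)
qed

lemma graded_map_simps:
  assumes f: "graded_map sM M sN N d f" and M: "graded_module sM M"
  shows "x \<in> M n \<Longrightarrow> m = n + d \<Longrightarrow> f n x \<in> N m"
    and "x \<in> M n \<Longrightarrow> y \<in> M n \<Longrightarrow> f n (x + y) = f n x + f n y"
    and "f n 0 = 0"
    and "x \<in> M n \<Longrightarrow> f n (- x) = - f n x"
    and "x \<in> M n \<Longrightarrow> y \<in> M n \<Longrightarrow> f n (x - y) = f n x - f n y"
    and "x \<in> M n \<Longrightarrow> f n (sM r x) = sN r (f n x)"
proof -
  show "\<And>x m. x \<in> M n \<Longrightarrow> m = n + d \<Longrightarrow> f n x \<in> N m"
    and add: "\<And>x y. x \<in> M n \<Longrightarrow> y \<in> M n \<Longrightarrow> f n (x + y) = f n x + f n y"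
    and "\<And>x. x \<in> M n \<Longrightarrow> f n (sM r x) = sN r (f n x)"
    using f unfolding graded_map_def by blast+
  then show zero: "f n 0 = 0"
    using graded_module_simps(1)[OF M] by (metis add_cancel_right_right add_0)
  show uminus: "\<And>x. x \<in> M n \<Longrightarrow> f n (- x) = - f n x"
    using add zero graded_module_simps(3)[OF M] by (metis add.right_inverse minus_unique)
  show "\<And>x y. x \<in> M n \<Longrightarrow> y \<in> M n \<Longrightarrow> f n (x - y) = f n x - f n y"
    using add uminus graded_module_simps(3)[OF M] by (metis diff_conv_add_uminus)
qed

lemma chain_complex_graded_module: "chain_complex s M b \<Longrightarrow> graded_module s M"
  and chain_complex_graded_map: "chain_complex s M b \<Longrightarrow> graded_map s M s M (-1) b"
  and chain_complex_boundary_boundary: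
    "chain_complex s M b \<Longrightarrow> x \<in> M n \<Longrightarrow> b (n - 1) (b n x) = 0"
  unfolding chain_complex_def by blast+

lemma chain_map_graded_map: "chain_map sM M bM sN N bN f \<Longrightarrow> graded_map sM M sN N 0 f"
  and chain_map_commute:
    "chain_map sM M bM sN N bN f \<Longrightarrow> x \<in> M n \<Longrightarrow> bN n (f n x) = f (n - 1) (bM n x)"
  unfolding chain_map_def by blast+

locale perturbation_data =
  fixes sL :: "'r::ring_1 \<Rightarrow> 'l::ab_group_add \<Rightarrow> 'l"
    and sM :: "'r \<Rightarrow> 'm::ab_group_add \<Rightarrow> 'm"
    and L :: "int \<Rightarrow> 'l set" and M :: "int \<Rightarrow> 'm set"
    and bL :: "int \<Rightarrow> 'l \<Rightarrow> 'l" and bM :: "int \<Rightarrow> 'm \<Rightarrow> 'm"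
    and i :: "int \<Rightarrow> 'l \<Rightarrow> 'm" and p :: "int \<Rightarrow> 'm \<Rightarrow> 'l"
    and h :: "int \<Rightarrow> 'm \<Rightarrow> 'm" and \<delta> :: "int \<Rightarrow> 'm \<Rightarrow> 'm"
    and g :: "int \<Rightarrow> 'm \<Rightarrow> 'm"
  assumes complex_L: "chain_complex sL L bL"
    and complex_M: "chain_complex sM M bM"
    and chain_map_i: "chain_map sL L bL sM M bM i"
    and chain_map_p: "chain_map sM M bM sL L bL p"
    and graded_map_h: "graded_map sM M sM M 1 h"
    and homotopy: "\<forall>n. \<forall>x\<in>M n. i n (p n x) = x + bM (n + 1) (h n x) + h (n - 1) (bM n x)"
    and graded_map_\<delta>: "graded_map sM M sM M (-1) \<delta>"
    and perturbation: "\<forall>n. \<forall>x\<in>M n.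
        bM (n - 1) (bM n x + \<delta> n x) + \<delta> (n - 1) (bM n x + \<delta> n x) = 0"
    and graded_map_g: "graded_map sM M sM M 0 g"
    and g_left_inverse: "\<forall>n. \<forall>x\<in>M n. g n (x - \<delta> (n + 1) (h n x)) = x"
    and g_right_inverse: "\<forall>n. \<forall>x\<in>M n. g n x - \<delta> (n + 1) (h n (g n x)) = x"
begin

lemmas graded_module_L = chain_complex_graded_module[OF complex_L]
lemmas graded_module_M = chain_complex_graded_module[OF complex_M]

lemmas L_simps[simp] = graded_module_simps[OF graded_module_L]
lemmas M_simps[simp] = graded_module_simps[OF graded_module_M]
lemmas bL_simps[simp] = graded_map_simps[OF chain_complex_graded_map[OF complex_L] graded_module_L]
lemmas bM_simps[simp] = graded_map_simps[OF chain_complex_graded_map[OF complex_M] graded_module_M]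
lemmas i_simps[simp] = graded_map_simps[OF chain_map_graded_map[OF chain_map_i] graded_module_L]
lemmas p_simps[simp] = graded_map_simps[OF chain_map_graded_map[OF chain_map_p] graded_module_M]
lemmas h_simps[simp] = graded_map_simps[OF graded_map_h graded_module_M]
lemmas \<delta>_simps[simp] = graded_map_simps[OF graded_map_\<delta> graded_module_M]
lemmas g_simps[simp] = graded_map_simps[OF graded_map_g graded_module_M]

lemmas bM_bM[simp] = chain_complex_boundary_boundary[OF complex_M]
lemmas bM_i = chain_map_commute[OF chain_map_i]
lemmas bL_p = chain_map_commute[OF chain_map_p]

lemma i_p: "x \<in> M n \<Longrightarrow> i n (p n x) = x + bM (n + 1) (h n x) + h (n - 1) (bM n x)"
  using homotopy by blast

lemma g_left: "x \<in> M n \<Longrightarrow> k = n + 1 \<Longrightarrow> g n (x - \<delta> k (h n x)) = x"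
  using g_left_inverse by blast

lemma g_right: "x \<in> M n \<Longrightarrow> k = n + 1 \<Longrightarrow> g n x - \<delta> k (h n (g n x)) = x"
  using g_right_inverse by blast

definition A :: "int \<Rightarrow> 'm \<Rightarrow> 'm" where "A n x = g (n - 1) (\<delta> n x)"

lemma graded_map_A: "graded_map sM M sM M (-1) A"
  unfolding graded_map_def A_def by simp

lemmas A_simps[simp] = graded_map_simps[OF graded_map_A graded_module_M]

lemma A_eq_\<delta>_plus_\<delta>hA: "x \<in> M n \<Longrightarrow> A n x = \<delta> n x + \<delta> n (h (n - 1) (A n x))"
  using g_right[of "\<delta> n x" "n - 1" n] unfolding A_def by (simp add: algebra_simps)

lemma A_eq_\<delta>_plus_Ah\<delta>: "x \<in> M n \<Longrightarrow> A n x = \<delta> n x + A n (h (n - 1) (\<delta> n x))"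
proof -
  assume x: "x \<in> M n"
  have "A n (x - h (n - 1) (\<delta> n x)) = \<delta> n x"
    using g_left[of "\<delta> n x" "n - 1" n] x unfolding A_def by simp
  then show ?thesis using x by (simp add: algebra_simps)
qed

lemma one_minus_\<delta>h_eq_0_imp_eq_0: "y \<in> M n \<Longrightarrow> k = n + 1 \<Longrightarrow> y - \<delta> k (h n y) = 0 \<Longrightarrow> y = 0"
  using g_left[of y n k] by simp

(* With w = (1 - h\<delta>)\<^sup>-\<^sup>1 x, the defect X = bA x + Ab x + A(ip)A x satisfies
   (1 - \<delta>h) X = (b + \<delta>)\<^sup>2 w = 0. *)
lemma A_Maurer_Cartan:
  assumes x: "x \<in> M n"
  shows "A (n - 1) (i (n - 1) (p (n - 1) (A n x))) = - bM (n - 1) (A n x) - A (n - 1) (bM n x)"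
proof -
  let ?X = "bM (n - 1) (A n x) + A (n - 1) (bM n x) + A (n - 1) (i (n - 1) (p (n - 1) (A n x)))"
  define w where "w = x + h (n - 1) (A n x)"
  have w: "w \<in> M n" using x by (simp add: w_def)
  have A_x: "A n x = \<delta> n w"
    using A_eq_\<delta>_plus_\<delta>hA[OF x] x by (simp add: w_def)
  have x_eq: "x = w - h (n - 1) (\<delta> n w)"
    unfolding A_x[symmetric] by (simp add: w_def)
  define q where "q = bM n w + \<delta> n w + h (n - 1 - 1) (bM (n - 1) (\<delta> n w))"
  have q: "q \<in> M (n - 1)" using w by (simp add: q_def)
  have X_eq: "?X = bM (n - 1) (\<delta> n w) + A (n - 1) q"
  proof -
    have bM_x: "bM n x = bM n w - bM n (h (n - 1) (\<delta> n w))"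
      using w by (subst x_eq) simp
    have ip: "i (n - 1) (p (n - 1) (\<delta> n w))
        = \<delta> n w + bM n (h (n - 1) (\<delta> n w)) + h (n - 1 - 1) (bM (n - 1) (\<delta> n w))"
      using i_p[of "\<delta> n w" "n - 1"] w by simp
    show ?thesis
      unfolding A_x bM_x ip q_def using w by (simp add: algebra_simps)
  qed
  have "?X - \<delta> (n - 1) (h (n - 1 - 1) ?X) =
     bM (n - 1) (\<delta> n w) - \<delta> (n - 1) (h (n - 1 - 1) (bM (n - 1) (\<delta> n w)))
     + (A (n - 1) q - \<delta> (n - 1) (h (n - 1 - 1) (A (n - 1) q)))"
    unfolding X_eq using w q by (simp add: algebra_simps)
  also have "\<dots> = bM (n - 1) (\<delta> n w) - \<delta> (n - 1) (h (n - 1 - 1) (bM (n - 1) (\<delta> n w)))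
     + \<delta> (n - 1) q"
    using A_eq_\<delta>_plus_\<delta>hA[OF q] by (simp add: algebra_simps)
  also have "\<dots> = bM (n - 1) (bM n w + \<delta> n w) + \<delta> (n - 1) (bM n w + \<delta> n w)"
    unfolding q_def using w by (simp add: algebra_simps)
  also have "\<dots> = 0" using perturbation w by blast
  finally have "?X - \<delta> (n - 1) (h (n - 1 - 1) ?X) = 0" .
  then have "?X = 0" by (rule one_minus_\<delta>h_eq_0_imp_eq_0[rotated 2]) (use x in simp_all)
  then show ?thesis by (simp add: eq_neg_iff_add_eq_0 algebra_simps)
qed

definition i_inf :: "int \<Rightarrow> 'l \<Rightarrow> 'm" where "i_inf n x = i n x + h (n - 1) (A n (i n x))"
definition p_inf :: "int \<Rightarrow> 'm \<Rightarrow> 'l" where "p_inf n x = p n x + p n (A (n + 1) (h n x))"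
definition b_inf :: "int \<Rightarrow> 'l \<Rightarrow> 'l" where "b_inf n x = bL n x + p (n - 1) (A n (i n x))"
definition h_inf :: "int \<Rightarrow> 'm \<Rightarrow> 'm" where "h_inf n x = h n x + h n (A (n + 1) (h n x))"

lemma graded_map_i_inf: "graded_map sL L sM M 0 i_inf"
  unfolding graded_map_def i_inf_def
  by (auto intro: M_simps(6)[symmetric] i_simps(1) h_simps(1) A_simps(1))

lemma graded_map_p_inf: "graded_map sM M sL L 0 p_inf"
  unfolding graded_map_def p_inf_def
  by (auto intro: L_simps(6)[symmetric] p_simps(1) h_simps(1) A_simps(1))

lemma graded_map_b_inf: "graded_map sL L sL L (-1) b_inf"
  unfolding graded_map_def b_inf_def
  by (auto intro: L_simps(6)[symmetric] bL_simps(1) p_simps(1) i_simps(1) A_simps(1))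

lemma graded_map_h_inf: "graded_map sM M sM M 1 h_inf"
  unfolding graded_map_def h_inf_def
  by (auto intro: M_simps(6)[symmetric] h_simps(1) A_simps(1))

lemmas i_inf_simps[simp] = graded_map_simps[OF graded_map_i_inf graded_module_L]
lemmas p_inf_simps[simp] = graded_map_simps[OF graded_map_p_inf graded_module_M]
lemmas b_inf_simps[simp] = graded_map_simps[OF graded_map_b_inf graded_module_L]
lemmas h_inf_simps[simp] = graded_map_simps[OF graded_map_h_inf graded_module_M]

lemma i_inf_chain:
  assumes x: "x \<in> L n"
  shows "bM n (i_inf n x) + \<delta> n (i_inf n x) = i_inf (n - 1) (b_inf n x)"
proof -
  define a where "a = A n (i n x)"
  have a: "a \<in> M (n - 1)" using x by (simp add: a_def)
  have i_b_inf: "i (n - 1) (b_inf n x) = bM n (i n x) + i (n - 1) (p (n - 1) a)"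
    using bM_i[OF x] x by (simp add: b_inf_def a_def)
  have A_i_b_inf: "A (n - 1) (i (n - 1) (b_inf n x)) = - bM (n - 1) a"
    unfolding i_b_inf a_def using A_Maurer_Cartan[of "i n x" n] x by simp
  have a_eq: "\<delta> n (i n x) + \<delta> n (h (n - 1) a) = a"
    unfolding a_def using A_eq_\<delta>_plus_\<delta>hA x by simp
  have "i_inf (n - 1) (b_inf n x) = bM n (i n x) + a + bM n (h (n - 1) a)"
    unfolding i_inf_def[of "n - 1"] A_i_b_inf unfolding i_b_inf i_p[OF a] using x a by simp
  also have "\<dots> = bM n (i n x) + \<delta> n (i n x) + \<delta> n (h (n - 1) a) + bM n (h (n - 1) a)"
    using a_eq by (metis add.assoc)
  also have "\<dots> = bM n (i_inf n x) + \<delta> n (i_inf n x)"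
    unfolding i_inf_def a_def[symmetric] using x a by (simp add: algebra_simps)
  finally show ?thesis ..
qed

lemma i_p_inf:
  assumes x: "x \<in> M n"
  defines "a \<equiv> A (n + 1) (h n x)"
  shows "i n (p_inf n x) = x + bM (n + 1) (h n x) + h (n - 1) (bM n x)
    + a + bM (n + 1) (h n a) + h (n - 1) (bM n a)"
  using i_p[OF x] i_p[of a n] x by (simp add: p_inf_def a_def algebra_simps)

lemma A_i_p_inf:
  assumes x: "x \<in> M n"
  shows "A n (i n (p_inf n x)) = A n x + A n (h (n - 1) (bM n x)) - bM n (A (n + 1) (h n x))"
proof -
  define a where "a = A (n + 1) (h n x)"
  have "A n (i n (p_inf n x)) = A n (i n (p n x)) + A n (i n (p n a))"
    using x by (simp add: p_inf_def a_def)
  also have "\<dots> = A n (i n (p n x)) - bM n a - A n (bM (n + 1) (h n x))"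
    using A_Maurer_Cartan[of "h n x" "n + 1"] x by (simp add: a_def)
  finally show ?thesis
    unfolding i_p[OF x] a_def using x by (simp add: algebra_simps)
qed

lemma p_inf_chain:
  assumes x: "x \<in> M n"
  shows "p_inf (n - 1) (bM n x + \<delta> n x) = b_inf n (p_inf n x)"
proof -
  have "p_inf (n - 1) (bM n x + \<delta> n x)
      = p (n - 1) (bM n x) + p (n - 1) (A n (h (n - 1) (bM n x)))
        + (p (n - 1) (\<delta> n x) + p (n - 1) (A n (h (n - 1) (\<delta> n x))))"
    using x by (simp add: p_inf_def algebra_simps)
  also have "\<dots> = p (n - 1) (bM n x) + p (n - 1) (A n (h (n - 1) (bM n x))) + p (n - 1) (A n x)"
    using A_eq_\<delta>_plus_Ah\<delta>[OF x] x by simp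
  also have "\<dots> = b_inf n (p_inf n x)"
    unfolding b_inf_def A_i_p_inf[OF x]
    using x bL_p[OF x] bL_p[of "A (n + 1) (h n x)" n] by (simp add: p_inf_def algebra_simps)
  finally show ?thesis .
qed

lemma i_inf_p_inf:
  assumes x: "x \<in> M n"
  shows "i_inf n (p_inf n x)
    = x + bM (n + 1) (h_inf n x) + \<delta> (n + 1) (h_inf n x) + h_inf (n - 1) (bM n x + \<delta> n x)"
proof -
  define a where "a = A (n + 1) (h n x)"
  have a: "a \<in> M n" using x by (simp add: a_def)
  have "x + bM (n + 1) (h_inf n x) + \<delta> (n + 1) (h_inf n x) + h_inf (n - 1) (bM n x + \<delta> n x)
      = x + bM (n + 1) (h n x) + bM (n + 1) (h n a) + (\<delta> (n + 1) (h n x) + \<delta> (n + 1) (h n a))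
        + h (n - 1) (bM n x) + h (n - 1) (A n (h (n - 1) (bM n x)))
        + (h (n - 1) (\<delta> n x) + h (n - 1) (A n (h (n - 1) (\<delta> n x))))"
    unfolding h_inf_def a_def[symmetric] using x a by (simp add: algebra_simps)
  also have "\<dots> = x + bM (n + 1) (h n x) + bM (n + 1) (h n a) + a
        + h (n - 1) (bM n x) + h (n - 1) (A n (h (n - 1) (bM n x))) + h (n - 1) (A n x)"
    using A_eq_\<delta>_plus_\<delta>hA[of "h n x" "n + 1"] A_eq_\<delta>_plus_Ah\<delta>[OF x] x
    by (simp add: a_def)
  also have "\<dots> = i_inf n (p_inf n x)"
    unfolding i_inf_def A_i_p_inf[OF x] unfolding i_p_inf[OF x] a_def[symmetric]
    using x a by (simp add: algebra_simps)
  finally show ?thesis ..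
qed

lemma null_homotopic_i_p_i_inf:
  "null_homotopic sL L b_inf sM M bM (\<lambda>n x. i n (p n (i_inf n x) - x))"
  unfolding null_homotopic_def
proof (intro exI[of _ "\<lambda>n x. h n (i_inf n x)"] conjI allI ballI)
  show "graded_map sL L sM M 1 (\<lambda>n x. h n (i_inf n x))" unfolding graded_map_def by simp
  fix n x assume x: "x \<in> L n"
  have "h (n - 1) (A n (i n x)) = h (n - 1) (\<delta> n (i n x) + \<delta> n (h (n - 1) (A n (i n x))))"
    using A_eq_\<delta>_plus_\<delta>hA[of "i n x" n] x by simp
  then show "i n (p n (i_inf n x) - x)
      = bM (n + 1) (h n (i_inf n x)) + h (n - 1) (i_inf (n - 1) (b_inf n x))"
    unfolding i_inf_chain[OF x, symmetric] using x i_p[of "i_inf n x" n]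
    by (simp add: i_inf_def algebra_simps)
qed

lemma null_homotopic_p_inf_i_p:
  "null_homotopic sM M bM sL L b_inf (\<lambda>n x. p_inf n (i n (p n x)) - p n x)"
  unfolding null_homotopic_def
proof (intro exI[of _ "\<lambda>n x. p_inf (n + 1) (h n x)"] conjI allI ballI)
  show "graded_map sM M sL L 1 (\<lambda>n x. p_inf (n + 1) (h n x))" unfolding graded_map_def by simp
  fix n x assume x: "x \<in> M n"
  have "p_inf n (bM (n + 1) (h n x) + \<delta> (n + 1) (h n x)) = b_inf (n + 1) (p_inf (n + 1) (h n x))"
    using p_inf_chain[of "h n x" "n + 1"] x by simp
  moreover have "p n (A (n + 1) (h n x))
      = p n (\<delta> (n + 1) (h n x) + A (n + 1) (h n (\<delta> (n + 1) (h n x))))"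
    using A_eq_\<delta>_plus_Ah\<delta>[of "h n x" "n + 1"] x by simp
  ultimately show "p_inf n (i n (p n x)) - p n x
      = b_inf (n + 1) (p_inf (n + 1) (h n x)) + p_inf (n - 1 + 1) (h (n - 1) (bM n x))"
    using x i_p[OF x] by (simp add: p_inf_def algebra_simps)
qed

lemma null_homotopic_p_i_inf_p_inf:
  "null_homotopic sM M (\<lambda>n x. bM n x + \<delta> n x) sL L bL (\<lambda>n x. p n (i_inf n (p_inf n x)) - p_inf n x)"
  unfolding null_homotopic_def
proof (intro exI[of _ "\<lambda>n x. p (n + 1) (h_inf n x)"] conjI allI ballI)
  show "graded_map sM M sL L 1 (\<lambda>n x. p (n + 1) (h_inf n x))" unfolding graded_map_def by simp
  fix n x assume x: "x \<in> M n"
  have "p n (A (n + 1) (h n x))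
      = p n (\<delta> (n + 1) (h n x) + \<delta> (n + 1) (h n (A (n + 1) (h n x))))"
    using A_eq_\<delta>_plus_\<delta>hA[of "h n x" "n + 1"] x by simp
  moreover have "bL (n + 1) (p (n + 1) (h_inf n x)) = p n (bM (n + 1) (h_inf n x))"
    using bL_p[of "h_inf n x" "n + 1"] x by simp
  ultimately show "p n (i_inf n (p_inf n x)) - p_inf n x
      = bL (n + 1) (p (n + 1) (h_inf n x)) + p (n - 1 + 1) (h_inf (n - 1) (bM n x + \<delta> n x))"
    unfolding i_inf_p_inf[OF x] using x by (simp add: p_inf_def h_inf_def algebra_simps)
qed

lemma null_homotopic_i_inf_p_inf_i:
  "null_homotopic sL L bL sM M (\<lambda>n x. bM n x + \<delta> n x) (\<lambda>n x. i_inf n (p_inf n (i n x) - x))"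
  unfolding null_homotopic_def
proof (intro exI[of _ "\<lambda>n x. h_inf n (i n x)"] conjI allI ballI)
  show "graded_map sL L sM M 1 (\<lambda>n x. h_inf n (i n x))" unfolding graded_map_def by simp
  fix n x assume x: "x \<in> L n"
  have "h (n - 1) (A n (i n x)) = h (n - 1) (\<delta> n (i n x) + A n (h (n - 1) (\<delta> n (i n x))))"
    using A_eq_\<delta>_plus_Ah\<delta>[of "i n x" n] x by simp
  then show "i_inf n (p_inf n (i n x) - x) = bM (n + 1) (h_inf n (i n x))
      + \<delta> (n + 1) (h_inf n (i n x)) + h_inf (n - 1) (i (n - 1) (bL n x))"
    unfolding bM_i[OF x, symmetric] using x i_inf_p_inf[of "i n x" n]
    by (simp add: i_inf_def h_inf_def algebra_simps)
qed

end

theorem lemma1p8: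
  fixes sL :: "'r::ring_1 \<Rightarrow> 'l::ab_group_add \<Rightarrow> 'l"
    and sM :: "'r \<Rightarrow> 'm::ab_group_add \<Rightarrow> 'm"
    and L :: "int \<Rightarrow> 'l set" and M :: "int \<Rightarrow> 'm set"
    and bL :: "int \<Rightarrow> 'l \<Rightarrow> 'l" and bM :: "int \<Rightarrow> 'm \<Rightarrow> 'm"
    and i :: "int \<Rightarrow> 'l \<Rightarrow> 'm" and p :: "int \<Rightarrow> 'm \<Rightarrow> 'l"
    and h :: "int \<Rightarrow> 'm \<Rightarrow> 'm" and \<delta> :: "int \<Rightarrow> 'm \<Rightarrow> 'm"
    and g :: "int \<Rightarrow> 'm \<Rightarrow> 'm"
  assumes cL: "chain_complex sL L bL"
    and cM: "chain_complex sM M bM"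
    and ci: "chain_map sL L bL sM M bM i"
    and cp: "chain_map sM M bM sL L bL p"
    and hh: "graded_map sM M sM M 1 h"
    and hom: "\<forall>n. \<forall>x\<in>M n. i n (p n x) = x + bM (n + 1) (h n x) + h (n - 1) (bM n x)"
    and pert: "graded_map sM M sM M (-1) \<delta>"
    and pert_sq: "\<forall>n. \<forall>x\<in>M n.
        bM (n - 1) (bM n x + \<delta> n x) + \<delta> (n - 1) (bM n x + \<delta> n x) = 0"
    and g_map: "graded_map sM M sM M 0 g"
    and g_left: "\<forall>n. \<forall>x\<in>M n. g n (x - \<delta> (n + 1) (h n x)) = x"
    and g_right: "\<forall>n. \<forall>x\<in>M n. g n x - \<delta> (n + 1) (h n (g n x)) = x"
  defines "i_inf \<equiv> \<lambda>n x. i n x + h (n - 1) (g (n - 1) (\<delta> n (i n x)))"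
    and "p_inf \<equiv> \<lambda>n x. p n x + p n (g n (\<delta> (n + 1) (h n x)))"
    and "b_inf \<equiv> \<lambda>n x. bL n x + p (n - 1) (g (n - 1) (\<delta> n (i n x)))"
  shows "null_homotopic sL L b_inf sM M bM (\<lambda>n x. i n (p n (i_inf n x) - x))
    \<and> null_homotopic sM M bM sL L b_inf (\<lambda>n x. p_inf n (i n (p n x)) - p n x)
    \<and> null_homotopic sM M (\<lambda>n x. bM n x + \<delta> n x) sL L bL
           (\<lambda>n x. p n (i_inf n (p_inf n x)) - p_inf n x)
    \<and> null_homotopic sL L bL sM M (\<lambda>n x. bM n x + \<delta> n x)
           (\<lambda>n x. i_inf n (p_inf n (i n x) - x))"
proof -
  interpret perturbation_data sL sM L M bL bM i p h \<delta> g
    using assms(1-11) by unfold_locales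
  have "i_inf = perturbation_data.i_inf i h \<delta> g"
    and "p_inf = perturbation_data.p_inf p h \<delta> g"
    and "b_inf = perturbation_data.b_inf bL i p \<delta> g"
    unfolding assms(12-14) by (intro ext; simp add: i_inf_def p_inf_def b_inf_def A_def)+
  then show ?thesis
    using null_homotopic_i_p_i_inf null_homotopic_p_inf_i_p
      null_homotopic_p_i_inf_p_inf null_homotopic_i_inf_p_inf_i by simp
qed

end
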